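(* Let $n\ge 3$ and let $w(t)$ be the solution of \[ w''+\frac{n-1}{t}w'+e^{w}=0,\qquad w(0)=0,\quad w'(0)=0 \qquad (t>0). \] Set $\lambda(t)=t^2e^{w(t)}$. If $t_n>0$ satisfies $\lambda'(t_n)=0$ (that is, the corresponding solution of the Gelfand problem is singular), then $\lambda''(t_n)\neq 0$.
   Context: The Gelfand problem is $\Delta u+\lambda e^u=0$ for $|x|<1$ in $\mathbb{R}^n$, with $u=0$ on $|x|=1$. Its solutions are radial, $u=u(|x|)$. The solution $w$ above is defined for all $t>0$. The full solution set of the Gelfand problem is the curve $t\mapsto(\lambda(t),u_t)$, $t\in(0,\infty)$, where $u_t(x)=w(t|x|)-w(t)$ and $\lambda(t)=t^2e^{w(t)}$. *)

theory Defs
  imports "HOL-Analysis.Analysis"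
begin

end

theory Submission
  imports Defs "HOL-Real_Asymp.Real_Asymp"
begin

text \<open>
  Write \<open>k = n - 1\<close> and \<open>\<lambda> t = t\<^sup>2 * exp (w t)\<close>. Then
  \<open>\<lambda>' = t exp w (2 + t w')\<close> and \<open>\<lambda>'' = exp w (2 + 4 t w' + (t w')\<^sup>2 + t\<^sup>2 w'')\<close>, so if both
  vanish at \<open>tn\<close> then \<open>tn w' = -2\<close>, \<open>tn\<^sup>2 w'' = 2\<close>, and the equation forces
  \<open>tn\<^sup>2 exp w = 2 (k - 1)\<close>. These are the value and slope at \<open>tn\<close> of the singular
  solution \<open>ws t = ln (2 (k - 1)) - 2 ln t\<close>. The equation is regular on every \<open>[a, tn]\<close>
  with \<open>a > 0\<close>, so a Gronwall estimate for \<open>(w - ws)\<^sup>2 + (w' - ws')\<^sup>2\<close> gives \<open>w = ws\<close> on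
  \<open>(0, tn]\<close>. But \<open>ws t \<rightarrow> \<infinity>\<close> as \<open>t \<rightarrow> 0\<^sup>+\<close>, whereas \<open>w\<close> is continuous at \<open>0\<close>; of the
  initial conditions only this continuity is needed.
\<close>

lemma abs_exp_diff_le:
  fixes x y :: real
  shows "\<bar>exp x - exp y\<bar> \<le> (exp x + exp y) * \<bar>x - y\<bar>"
proof -
  have tangent: "exp u * (1 + (v - u)) \<le> exp v" for u v :: real
  proof -
    have "exp u * (1 + (v - u)) \<le> exp u * exp (v - u)"
      by (rule mult_left_mono) auto
    also have "\<dots> = exp v"
      by (simp add: exp_diff)
    finally show ?thesis .
  qed
  have "exp x - exp y \<le> exp x * (x - y)"
    using tangent[of x y] by (simp add: algebra_simps)
  also have "\<dots> \<le> exp x * \<bar>x - y\<bar>"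
    by (rule mult_left_mono) auto
  also have "\<dots> \<le> (exp x + exp y) * \<bar>x - y\<bar>"
    by (rule mult_right_mono) auto
  finally have upper: "exp x - exp y \<le> (exp x + exp y) * \<bar>x - y\<bar>" .
  have "exp y - exp x \<le> exp y * (y - x)"
    using tangent[of y x] by (simp add: algebra_simps)
  also have "\<dots> \<le> exp y * \<bar>x - y\<bar>"
    by (rule mult_left_mono) auto
  also have "\<dots> \<le> (exp x + exp y) * \<bar>x - y\<bar>"
    by (rule mult_right_mono) auto
  finally show ?thesis
    using upper by linarith
qed

lemma gronwall_backward:
  fixes g g' :: "real \<Rightarrow> real"
  assumes "a \<le> b"
    and deriv: "\<And>t. t \<in> {a..b} \<Longrightarrow> (g has_real_derivative g' t) (at t)"
    and lower: "\<And>t. t \<in> {a..b} \<Longrightarrow> - C * g t \<le> g' t"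
  shows "g a \<le> exp (C * (b - a)) * g b"
proof -
  have "g a * exp (C * a) \<le> g b * exp (C * b)"
  proof (rule DERIV_nonneg_imp_nondecreasing[OF \<open>a \<le> b\<close>])
    fix t assume "a \<le> t" "t \<le> b"
    then have "((\<lambda>t. g t * exp (C * t)) has_real_derivative (g' t + C * g t) * exp (C * t)) (at t)"
      using deriv by (auto intro!: derivative_eq_intros simp: algebra_simps)
    moreover have "0 \<le> (g' t + C * g t) * exp (C * t)"
      using lower[of t] \<open>a \<le> t\<close> \<open>t \<le> b\<close> by simp
    ultimately show "\<exists>y. ((\<lambda>t. g t * exp (C * t)) has_real_derivative y) (at t) \<and> 0 \<le> y"
      by blast
  qed
  then have "g a \<le> g b * exp (C * b) / exp (C * a)"
    by (simp add: pos_le_divide_eq)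
  then show ?thesis
    by (simp add: exp_diff right_diff_distrib ac_simps)
qed

lemma energy_deriv_lower_bound:
  fixes d e K X M :: real
  assumes "0 \<le> M" and "\<bar>X\<bar> \<le> M * \<bar>d\<bar>"
  shows "- (1 + 2 * \<bar>K\<bar> + M) * (d\<^sup>2 + e\<^sup>2) \<le> 2 * d * e - 2 * K * e\<^sup>2 - 2 * e * X"
proof -
  have young: "2 * \<bar>d\<bar> * \<bar>e\<bar> \<le> d\<^sup>2 + e\<^sup>2"
    using sum_squares_ge_zero[of "\<bar>d\<bar> - \<bar>e\<bar>" 0] by (simp add: power2_eq_square algebra_simps)
  have "- (2 * \<bar>d\<bar> * \<bar>e\<bar>) \<le> 2 * d * e"
    using abs_ge_minus_self[of "d * e"] by (simp add: abs_mult)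
  moreover have "2 * K * e\<^sup>2 \<le> 2 * \<bar>K\<bar> * e\<^sup>2"
    by (rule mult_right_mono) auto
  moreover have "2 * \<bar>K\<bar> * e\<^sup>2 \<le> 2 * \<bar>K\<bar> * (d\<^sup>2 + e\<^sup>2)"
    by (rule mult_left_mono) auto
  moreover have "2 * e * X \<le> M * (2 * \<bar>d\<bar> * \<bar>e\<bar>)"
    using mult_left_mono[OF assms(2), of "2 * \<bar>e\<bar>"] abs_ge_self[of "2 * e * X"]
    by (simp add: abs_mult algebra_simps)
  moreover have "M * (2 * \<bar>d\<bar> * \<bar>e\<bar>) \<le> M * (d\<^sup>2 + e\<^sup>2)"
    using young \<open>0 \<le> M\<close> by (rule mult_left_mono)
  moreover have "- (1 + 2 * \<bar>K\<bar> + M) * (d\<^sup>2 + e\<^sup>2)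
      = - (d\<^sup>2 + e\<^sup>2) - 2 * \<bar>K\<bar> * (d\<^sup>2 + e\<^sup>2) - M * (d\<^sup>2 + e\<^sup>2)"
    by (simp add: algebra_simps)
  ultimately show ?thesis
    using young by linarith
qed

lemma radial_gelfand_unique:
  fixes u u' u'' v v' v'' :: "real \<Rightarrow> real" and k a b :: real
  assumes "0 < a" and "a \<le> b"
    and du: "\<And>t. t \<in> {a..b} \<Longrightarrow> (u has_real_derivative u' t) (at t)"
    and ddu: "\<And>t. t \<in> {a..b} \<Longrightarrow> (u' has_real_derivative u'' t) (at t)"
    and ode_u: "\<And>t. t \<in> {a..b} \<Longrightarrow> u'' t + k / t * u' t + exp (u t) = 0"
    and dv: "\<And>t. t \<in> {a..b} \<Longrightarrow> (v has_real_derivative v' t) (at t)"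
    and ddv: "\<And>t. t \<in> {a..b} \<Longrightarrow> (v' has_real_derivative v'' t) (at t)"
    and ode_v: "\<And>t. t \<in> {a..b} \<Longrightarrow> v'' t + k / t * v' t + exp (v t) = 0"
    and "u b = v b" and "u' b = v' b"
  shows "u a = v a"
proof -
  have "continuous_on {a..b} (\<lambda>t. exp (u t) + exp (v t))"
    using du dv by (intro continuous_intros continuous_at_imp_continuous_on ballI
        DERIV_isCont) auto
  then obtain M where M: "\<And>t. t \<in> {a..b} \<Longrightarrow> exp (u t) + exp (v t) \<le> M"
    using continuous_attains_sup[of "{a..b}"] \<open>a \<le> b\<close> by fastforce
  then have "0 \<le> M"
    using \<open>a \<le> b\<close> by (smt (verit) atLeastAtMost_iff exp_gt_zero)
  define C where "C = 1 + 2 * \<bar>k\<bar> / a + M"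
  define g where "g t = (u t - v t)\<^sup>2 + (u' t - v' t)\<^sup>2" for t
  define g' where "g' t = 2 * (u t - v t) * (u' t - v' t)
    + 2 * (u' t - v' t) * (u'' t - v'' t)" for t
  have "g a \<le> exp (C * (b - a)) * g b"
  proof (rule gronwall_backward[OF \<open>a \<le> b\<close>])
    fix t assume t: "t \<in> {a..b}"
    show "(g has_real_derivative g' t) (at t)"
      unfolding g_def g'_def using du[OF t] dv[OF t] ddu[OF t] ddv[OF t]
      by (auto intro!: derivative_eq_intros simp: algebra_simps)
    have "0 < t" "a \<le> t"
      using t \<open>0 < a\<close> by auto
    have exp_lipschitz: "\<bar>exp (u t) - exp (v t)\<bar> \<le> M * \<bar>u t - v t\<bar>"
      using abs_exp_diff_le[of "u t" "v t"] M[OF t] by (smt (verit) abs_ge_zero mult_right_mono)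
    have ode_diff: "u'' t - v'' t = - (k / t * (u' t - v' t)) - (exp (u t) - exp (v t))"
      using ode_u[OF t] ode_v[OF t] by (simp add: right_diff_distrib)
    have "- (1 + 2 * \<bar>k / t\<bar> + M) * g t \<le> 2 * (u t - v t) * (u' t - v' t)
        - 2 * (k / t) * (u' t - v' t)\<^sup>2 - 2 * (u' t - v' t) * (exp (u t) - exp (v t))"
      unfolding g_def by (rule energy_deriv_lower_bound[OF \<open>0 \<le> M\<close> exp_lipschitz])
    also have "\<dots> = g' t"
      unfolding g'_def ode_diff by (simp add: power2_eq_square algebra_simps)
    finally have "- (1 + 2 * \<bar>k / t\<bar> + M) * g t \<le> g' t" .
    moreover have "2 * \<bar>k / t\<bar> \<le> 2 * \<bar>k\<bar> / a"
      using \<open>0 < a\<close> \<open>a \<le> t\<close> by (simp add: abs_div frac_le)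
    moreover have "0 \<le> g t"
      by (simp add: g_def)
    ultimately show "- C * g t \<le> g' t"
      unfolding C_def by (smt (verit) mult_right_mono)
  qed
  moreover have "g b = 0"
    using \<open>u b = v b\<close> \<open>u' b = v' b\<close> by (simp add: g_def)
  ultimately have "(u a - v a)\<^sup>2 + (u' a - v' a)\<^sup>2 \<le> 0"
    by (simp add: g_def)
  then show ?thesis
    by (simp add: sum_power2_le_zero_iff)
qed

text \<open>For \<open>k = n - 1\<close> this is \<open>-2 ln |x|\<close> shifted by \<open>ln (2 (n - 2))\<close>, the singular
  solution of the Gelfand problem at \<open>\<lambda> = 2 (n - 2)\<close>.\<close>
definition gelfand_singular :: "real \<Rightarrow> real \<Rightarrow> real" where
  "gelfand_singular k t = ln (2 * (k - 1)) - 2 * ln t"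

lemma has_real_derivative_gelfand_singular:
  "0 < t \<Longrightarrow> (gelfand_singular k has_real_derivative - 2 / t) (at t)"
  unfolding gelfand_singular_def by (auto intro!: derivative_eq_intros)

lemma gelfand_singular_ode:
  assumes "1 < k" and "0 < t"
  shows "2 / t\<^sup>2 + k / t * (- 2 / t) + exp (gelfand_singular k t) = 0"
proof -
  have "exp (gelfand_singular k t) = 2 * (k - 1) / t\<^sup>2"
    using assms by (simp add: gelfand_singular_def exp_diff exp_double)
  then show ?thesis
    using assms by (simp add: field_simps power2_eq_square)
qed

lemma filterlim_gelfand_singular_at_right_0:
  "filterlim (gelfand_singular k) at_top (at_right 0)"
  unfolding gelfand_singular_def by real_asymp

lemma deriv_sq_mult_exp:
  fixes w w' w'' :: "real \<Rightarrow> real"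
  assumes d1: "\<And>t. 0 < t \<Longrightarrow> (w has_real_derivative w' t) (at t)"
    and d2: "\<And>t. 0 < t \<Longrightarrow> (w' has_real_derivative w'' t) (at t)"
    and "0 < t"
  shows "deriv (\<lambda>s. s\<^sup>2 * exp (w s)) t = t * exp (w t) * (2 + t * w' t)"
    and "deriv (deriv (\<lambda>s. s\<^sup>2 * exp (w s))) t
      = exp (w t) * (2 + 4 * (t * w' t) + (t * w' t)\<^sup>2 + t\<^sup>2 * w'' t)"
proof -
  have first: "deriv (\<lambda>s. s\<^sup>2 * exp (w s)) s = s * exp (w s) * (2 + s * w' s)" if "0 < s" for s
    by (rule DERIV_imp_deriv)
      (use d1[OF that] in \<open>auto intro!: derivative_eq_intros simp: algebra_simps power2_eq_square\<close>)
  then show "deriv (\<lambda>s. s\<^sup>2 * exp (w s)) t = t * exp (w t) * (2 + t * w' t)"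
    using \<open>0 < t\<close> .
  have "\<forall>\<^sub>F s in nhds t. deriv (\<lambda>s. s\<^sup>2 * exp (w s)) s = s * exp (w s) * (2 + s * w' s)"
    using eventually_nhds_in_open[of "{0<..}" t] \<open>0 < t\<close> by (auto elim!: eventually_mono intro: first)
  moreover have "((\<lambda>s. s * exp (w s) * (2 + s * w' s)) has_real_derivative
      exp (w t) * (2 + 4 * (t * w' t) + (t * w' t)\<^sup>2 + t\<^sup>2 * w'' t)) (at t)"
    using d1[OF \<open>0 < t\<close>] d2[OF \<open>0 < t\<close>]
    by (auto intro!: derivative_eq_intros simp: algebra_simps power2_eq_square)
  ultimately show "deriv (deriv (\<lambda>s. s\<^sup>2 * exp (w s))) t
      = exp (w t) * (2 + 4 * (t * w' t) + (t * w' t)\<^sup>2 + t\<^sup>2 * w'' t)"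
    by (intro DERIV_imp_deriv) (simp add: DERIV_cong_ev)
qed

lemma degenerate_critical_point_imp_singular:
  fixes t k y p q :: real
  assumes "0 < t" and "1 < k"
    and first: "2 + t * p = 0"
    and second: "2 + 4 * (t * p) + (t * p)\<^sup>2 + t\<^sup>2 * q = 0"
    and ode: "q + k / t * p + exp y = 0"
  shows "y = gelfand_singular k t" and "p = - 2 / t"
proof -
  have tp: "t * p = - 2"
    using first by linarith
  have "t\<^sup>2 * q = 2"
    using second unfolding tp by simp
  moreover have "t\<^sup>2 * (q + k / t * p + exp y) = t\<^sup>2 * q + k * (t * p) + t\<^sup>2 * exp y"
    using \<open>0 < t\<close> by (simp add: field_simps power2_eq_square)
  ultimately have "t\<^sup>2 * exp y = 2 * (k - 1)"
    using ode unfolding tp by simp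
  then have "ln (t\<^sup>2 * exp y) = ln (2 * (k - 1))"
    by simp
  then show "y = gelfand_singular k t"
    using \<open>0 < t\<close> by (simp add: gelfand_singular_def ln_mult ln_realpow)
  show "p = - 2 / t"
    using first \<open>0 < t\<close> by (simp add: field_simps)
qed

lemma eq_gelfand_singular_if_eq_at:
  fixes w w' w'' :: "real \<Rightarrow> real" and k tn t :: real
  assumes "1 < k"
    and d1: "\<And>t. 0 < t \<Longrightarrow> (w has_real_derivative w' t) (at t)"
    and d2: "\<And>t. 0 < t \<Longrightarrow> (w' has_real_derivative w'' t) (at t)"
    and ode: "\<And>t. 0 < t \<Longrightarrow> w'' t + k / t * w' t + exp (w t) = 0"
    and "w tn = gelfand_singular k tn" and "w' tn = - 2 / tn"
    and "0 < t" and "t \<le> tn"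
  shows "w t = gelfand_singular k t"
proof (rule radial_gelfand_unique[where v = "gelfand_singular k" and v' = "\<lambda>s. - 2 / s"
      and v'' = "\<lambda>s. 2 / s\<^sup>2", OF \<open>0 < t\<close> \<open>t \<le> tn\<close>])
  fix s assume "s \<in> {t..tn}"
  then have "0 < s"
    using \<open>0 < t\<close> by simp
  then show "(w has_real_derivative w' s) (at s)" "(w' has_real_derivative w'' s) (at s)"
    "w'' s + k / s * w' s + exp (w s) = 0"
    "(gelfand_singular k has_real_derivative - 2 / s) (at s)"
    "2 / s\<^sup>2 + k / s * (- 2 / s) + exp (gelfand_singular k s) = 0"
    by (rule d1 d2 ode has_real_derivative_gelfand_singular gelfand_singular_ode[OF \<open>1 < k\<close>])+
  show "((\<lambda>s. - 2 / s) has_real_derivative 2 / s\<^sup>2) (at s)"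
    using \<open>0 < s\<close> by (auto intro!: derivative_eq_intros simp: power2_eq_square)
qed (use assms in simp_all)

lemma not_tendsto_at_right_0_if_eq_gelfand_singular:
  fixes w :: "real \<Rightarrow> real"
  assumes "0 < tn" and "\<And>t. 0 < t \<Longrightarrow> t \<le> tn \<Longrightarrow> w t = gelfand_singular k t"
  shows "\<not> (w \<longlongrightarrow> c) (at_right 0)"
proof
  assume "(w \<longlongrightarrow> c) (at_right 0)"
  moreover have "filterlim w at_top (at_right 0)"
  proof (rule filterlim_cong[THEN iffD2, OF refl refl _ filterlim_gelfand_singular_at_right_0])
    show "\<forall>\<^sub>F t in at_right 0. w t = gelfand_singular k t"
      using eventually_at_right_real[OF \<open>0 < tn\<close>] by eventually_elim (simp add: assms(2))
  qed
  ultimately show False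
    by (meson filterlim_at_top_imp_at_infinity not_tendsto_and_filterlim_at_infinity
        trivial_limit_at_right_real)
qed

theorem theorem5p1:
  fixes n :: nat and w w' w'' :: "real \<Rightarrow> real" and tn :: real
  assumes n3: "n \<ge> 3"
    and cont0: "continuous_on {0..} w"
    and init0: "w 0 = 0"
    and dinit0: "(w has_real_derivative 0) (at 0 within {0..})"
    and d1: "\<And>t. t > 0 \<Longrightarrow> (w has_real_derivative w' t) (at t)"
    and d2: "\<And>t. t > 0 \<Longrightarrow> (w' has_real_derivative w'' t) (at t)"
    and ode: "\<And>t. t > 0 \<Longrightarrow> w'' t + (real n - 1) / t * w' t + exp (w t) = 0"
    and tpos: "tn > 0"
    and crit: "deriv (\<lambda>t. t\<^sup>2 * exp (w t)) tn = 0"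
  shows "deriv (deriv (\<lambda>t. t\<^sup>2 * exp (w t))) tn \<noteq> 0"
proof
  assume degenerate: "deriv (deriv (\<lambda>t. t\<^sup>2 * exp (w t))) tn = 0"
  define k where "k = real n - 1"
  have "1 < k"
    using n3 by (simp add: k_def)
  have ode_k: "w'' t + k / t * w' t + exp (w t) = 0" if "0 < t" for t
    using ode[OF that] by (simp add: k_def)
  have "2 + tn * w' tn = 0"
    using crit deriv_sq_mult_exp(1)[OF d1 d2 tpos] tpos by simp
  moreover have "2 + 4 * (tn * w' tn) + (tn * w' tn)\<^sup>2 + tn\<^sup>2 * w'' tn = 0"
    using degenerate deriv_sq_mult_exp(2)[OF d1 d2 tpos] by simp
  ultimately have "w tn = gelfand_singular k tn" "w' tn = - 2 / tn"
    using degenerate_critical_point_imp_singular[OF tpos \<open>1 < k\<close> _ _ ode_k[OF tpos]] by auto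
  then have "\<not> (w \<longlongrightarrow> w 0) (at_right 0)"
    using eq_gelfand_singular_if_eq_at[OF \<open>1 < k\<close> d1 d2 ode_k]
    by (intro not_tendsto_at_right_0_if_eq_gelfand_singular[OF tpos]) auto
  moreover have "(w \<longlongrightarrow> w 0) (at_right 0)"
    using cont0 by (auto simp: continuous_on_def intro: tendsto_within_subset)
  ultimately show False
    by contradiction
qed

end
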